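(* Let $\mathscr A=\{0,1,2\}$, and let $\mu$ be the inhomogeneous multinomial measure on $\partial\mathscr A^\ast=\mathscr A^{\mathbb N}$ with parameters $a_1,a_2,a_3,b_1,b_2,b_3\in(0,1)$, $\sum a_i=\sum b_i=1$, and a sequence $(T_k)$ (integers, $T_1=1$, strictly increasing, $T_{k+1}/T_k\to\infty$). Fix $q\in\mathbb R$. Then there exist a Borel probability measure $\nu$ on $\partial\mathscr A^\ast$ and a strictly increasing sequence of integers $(n_k)_{k\ge1}$ such that (i) for every $n\ge1$ and every $w\in\mathscr A^n$, $\nu(w)\le\mu(w)^q\,3^{-n\underline\tau(q)}$; (ii) for every $\varepsilon>0$ there is $k_0$ such that for all $k\ge k_0$ and all $w\in\mathscr A^{n_k}$, $\nu(w)\le\mu(w)^q\,3^{-n_k(\tau(q)-\varepsilon)}$.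
   Context: The inhomogeneous multinomial measure: for $w=\varepsilon_1\cdots\varepsilon_n\in\mathscr A^n$, $\mu(w)=\mu([w])=\prod_{j=1}^np_j$, where $p_j=a_{\varepsilon_j+1}$ if $T_{2k-1}\le j<T_{2k}$ for some $k$, and $p_j=b_{\varepsilon_j+1}$ if $T_{2k}\le j<T_{2k+1}$ for some $k$; $[w]$ denotes the set of infinite words beginning with $w$, and $\nu(w)=\nu([w])$. Define $\tau_n(q)$ by $\sum_{w\in\mathscr A^n}\mu(w)^q=3^{n\tau_n(q)}$, and $\tau(q)=\limsup_{n\to\infty}\tau_n(q)$, $\underline\tau(q)=\liminf_{n\to\infty}\tau_n(q)$. *)

theory Defs
  imports "HOL-Probability.Probability"
begin

definition words :: "nat \<Rightarrow> nat list set" where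
  "words n = {w. length w = n \<and> set w \<subseteq> {0,1,2}}"

definition a_block :: "(nat \<Rightarrow> nat) \<Rightarrow> nat \<Rightarrow> bool" where
  "a_block T j \<longleftrightarrow> (\<exists>k\<ge>1. T (2*k - 1) \<le> j \<and> j < T (2*k))"

text \<open>Inhomogeneous multinomial measure of a cylinder; a, b indexed by 1,2,3.\<close>
definition mu :: "(nat \<Rightarrow> real) \<Rightarrow> (nat \<Rightarrow> real) \<Rightarrow> (nat \<Rightarrow> nat) \<Rightarrow> nat list \<Rightarrow> real" where
  "mu a b T w = (\<Prod>j\<in>{1..length w}.
      (if a_block T j then a (w ! (j - 1) + 1) else b (w ! (j - 1) + 1)))"

definition tau_n :: "(nat \<Rightarrow> real) \<Rightarrow> (nat \<Rightarrow> real) \<Rightarrow> (nat \<Rightarrow> nat) \<Rightarrow> real \<Rightarrow> nat \<Rightarrow> real" where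
  "tau_n a b T q n = log 3 (\<Sum>w\<in>words n. mu a b T w powr q) / real n"

definition tau_up :: "(nat \<Rightarrow> real) \<Rightarrow> (nat \<Rightarrow> real) \<Rightarrow> (nat \<Rightarrow> nat) \<Rightarrow> real \<Rightarrow> real" where
  "tau_up a b T q = real_of_ereal (limsup (\<lambda>n. ereal (tau_n a b T q n)))"

definition tau_low :: "(nat \<Rightarrow> real) \<Rightarrow> (nat \<Rightarrow> real) \<Rightarrow> (nat \<Rightarrow> nat) \<Rightarrow> real \<Rightarrow> real" where
  "tau_low a b T q = real_of_ereal (liminf (\<lambda>n. ereal (tau_n a b T q n)))"

text \<open>The symbolic space A^N with its product (= Borel) sigma-algebra, and cylinders.\<close>
definition seq_space :: "(nat \<Rightarrow> nat) measure" where
  "seq_space = PiM UNIV (\<lambda>_. count_space {0,1,2})"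

definition cyl :: "nat list \<Rightarrow> (nat \<Rightarrow> nat) set" where
  "cyl w = {x \<in> space seq_space. \<forall>i<length w. x i = w ! i}"

end

theory Submission
  imports Defs
begin

text \<open>Take for \<open>\<nu>\<close> the product measure that gives the letter \<open>x\<close> at position \<open>j\<close> the
  weight \<open>p\<^sub>j(x) powr q / (\<Sum>y. p\<^sub>j(y) powr q)\<close>. The partition sum \<open>\<Sum>\<^bsub>w \<in> words n\<^esub> \<mu>(w) powr q\<close>
  factors over the positions, so \<open>\<nu>(w) = \<mu>(w) powr q * 3 powr (- n * tau_n n)\<close> exactly.
  Hence (ii) holds along any subsequence on which \<open>tau_n\<close> tends to \<open>tau_up\<close>, and (i) amounts
  to \<open>tau_low \<le> tau_n n\<close> for every \<open>n \<ge> 1\<close>. Now \<open>tau_n n\<close> is the average over \<open>j \<le> n\<close> of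
  the homogeneous exponents \<open>\<tau>\<^sub>a(q)\<close>, \<open>\<tau>\<^sub>b(q)\<close> of the blocks containing \<open>j\<close>, so it is at least
  their minimum; and since \<open>T\<^sub>k\<^sub>+\<^sub>1 / T\<^sub>k \<rightarrow> \<infinity>\<close>, at the end of a long block of the kind
  realising the minimum the average is close to it. So \<open>tau_low\<close> is exactly this minimum.\<close>

lemma words_Suc: "words (Suc n) = (\<lambda>(w,x). w @ [x]) ` (words n \<times> {0,1,2})"
proof
  show "(\<lambda>(w,x). w @ [x]) ` (words n \<times> {0,1,2}) \<subseteq> words (Suc n)"
    by (auto simp: words_def)
  show "words (Suc n) \<subseteq> (\<lambda>(w,x). w @ [x]) ` (words n \<times> {0,1,2})"
  proof
    fix v assume v: "v \<in> words (Suc n)"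
    then have "v \<noteq> []" by (auto simp: words_def)
    then obtain w x where vw: "v = w @ [x]" by (metis rev_exhaust)
    with v have "w \<in> words n" "x \<in> {0,1,2}" by (auto simp: words_def)
    with vw show "v \<in> (\<lambda>(w,x). w @ [x]) ` (words n \<times> {0,1,2})" by force
  qed
qed

lemma prod_positions_snoc:
  "(\<Prod>j\<in>{1..Suc (length w)}. f j ((w @ [x]) ! (j - 1)))
     = (\<Prod>j\<in>{1..length w}. f j (w ! (j - 1))) * f (Suc (length w)) x"
proof -
  have "(\<Prod>j\<in>{1..length w}. f j ((w @ [x]) ! (j - 1))) = (\<Prod>j\<in>{1..length w}. f j (w ! (j - 1)))"
    by (rule prod.cong) (auto simp: nth_append)
  then show ?thesis by simp
qed

lemma sum_words_prod_positions:
  fixes f :: "nat \<Rightarrow> nat \<Rightarrow> 'a::comm_semiring_1"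
  shows "(\<Sum>w\<in>words n. \<Prod>j\<in>{1..n}. f j (w ! (j - 1))) = (\<Prod>j\<in>{1..n}. \<Sum>x\<in>{0,1,2}. f j x)"
proof (induction n)
  case 0
  have "words 0 = {[]}" by (auto simp: words_def)
  then show ?case by simp
next
  case (Suc n)
  have inj: "inj_on (\<lambda>(w,x). w @ [x]) (words n \<times> {0,1,2})"
    by (auto simp: inj_on_def)
  have "(\<Sum>w\<in>words (Suc n). \<Prod>j\<in>{1..Suc n}. f j (w ! (j - 1)))
      = (\<Sum>w\<in>words n. \<Sum>x\<in>{0,1,2}. (\<Prod>j\<in>{1..n}. f j (w ! (j - 1))) * f (Suc n) x)"
    unfolding words_Suc sum.reindex[OF inj] sum.cartesian_product
    by (intro sum.cong refl) (auto simp: words_def prod_positions_snoc[of _ "_ :: nat list", simplified])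
  also have "\<dots> = (\<Sum>w\<in>words n. \<Prod>j\<in>{1..n}. f j (w ! (j - 1))) * (\<Sum>x\<in>{0,1,2}. f (Suc n) x)"
    by (simp only: sum_product)
  also have "\<dots> = (\<Prod>j\<in>{1..Suc n}. \<Sum>x\<in>{0,1,2}. f j x)"
    unfolding Suc.IH by simp
  finally show ?case .
qed

definition letter_measure :: "(nat \<Rightarrow> real) \<Rightarrow> nat measure" where
  "letter_measure p = point_measure {0,1,2} (\<lambda>x. ennreal (p x / (\<Sum>y\<in>{0,1,2}. p y)))"

text \<open>Coordinate \<open>i\<close> of a sequence carries the letter at the 1-based position \<open>Suc i\<close>.\<close>
definition weighted_product :: "(nat \<Rightarrow> nat \<Rightarrow> real) \<Rightarrow> (nat \<Rightarrow> nat) measure" where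
  "weighted_product f = PiM UNIV (\<lambda>i. letter_measure (f (Suc i)))"

lemma emeasure_letter_measure_singleton:
  assumes pos: "\<And>y. y \<in> {0,1,2} \<Longrightarrow> 0 < p y" and x: "x \<in> {0,1,2}"
  shows "emeasure (letter_measure p) {x} = ennreal (p x / (\<Sum>y\<in>{0,1,2}. p y))"
  unfolding letter_measure_def using x by (subst emeasure_point_measure_finite) auto

lemma prob_space_letter_measure:
  assumes pos: "\<And>y. y \<in> {0,1,2} \<Longrightarrow> 0 < p y"
  shows "prob_space (letter_measure p)"
proof (rule prob_spaceI)
  have total: "0 < (\<Sum>y\<in>{0::nat,1,2}. p y)"
    using pos by (intro sum_pos) auto
  have "emeasure (letter_measure p) (space (letter_measure p))
      = (\<Sum>x\<in>{0,1,2}. ennreal (p x / (\<Sum>y\<in>{0,1,2}. p y)))"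
    unfolding letter_measure_def
    by (simp add: emeasure_point_measure_finite space_point_measure del: sum.insert)
  also have "\<dots> = ennreal (\<Sum>x\<in>{0,1,2}. p x / (\<Sum>y\<in>{0,1,2}. p y))"
    using pos total by (intro sum_ennreal) (auto intro: less_imp_le)
  also have "(\<Sum>x\<in>{0,1,2}. p x / (\<Sum>y\<in>{0::nat,1,2}. p y)) = 1"
    using total by (simp only: sum_divide_distrib[symmetric] divide_self less_irrefl)
  finally show "emeasure (letter_measure p) (space (letter_measure p)) = 1" by simp
qed

lemma prob_space_weighted_product:
  assumes "\<And>j x. x \<in> {0,1,2} \<Longrightarrow> 0 < f j x"
  shows "prob_space (weighted_product f)"
  unfolding weighted_product_def using assms
  by (intro prob_space_PiM prob_space_letter_measure) auto

lemma sets_weighted_product: "sets (weighted_product f) = sets seq_space"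
  unfolding weighted_product_def seq_space_def letter_measure_def
  by (rule sets_PiM_cong) (auto simp: sets_point_measure)

lemma measure_weighted_product_cyl:
  assumes pos: "\<And>j x. x \<in> {0,1,2} \<Longrightarrow> 0 < f j x" and w: "w \<in> words n"
  shows "measure (weighted_product f) (cyl w)
           = (\<Prod>j\<in>{1..n}. f j (w ! (j - 1))) / (\<Prod>j\<in>{1..n}. \<Sum>x\<in>{0,1,2}. f j x)"
proof -
  let ?M = "\<lambda>i. letter_measure (f (Suc i))"
  have prob: "prob_space (?M i)" for i
    using pos by (intro prob_space_letter_measure) auto
  interpret product_prob_space ?M UNIV
    by (simp add: product_prob_space_def product_prob_space_axioms_def product_sigma_finite_def
        prob prob_space_imp_sigma_finite)
  have len: "length w = n" using w by (simp add: words_def)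
  have letters: "w ! i \<in> {0,1,2}" if "i < n" for i
    using w that nth_mem[of i w] unfolding words_def by blast
  have "space seq_space = space (PiM UNIV ?M)"
    by (simp add: seq_space_def space_PiM letter_measure_def space_point_measure)
  then have cyl: "cyl w = prod_emb UNIV ?M {..<n} (PiE {..<n} (\<lambda>i. {w ! i}))"
    using len unfolding cyl_def prod_emb_def by (auto simp: space_PiM PiE_iff)
  have "measure (weighted_product f) (cyl w) = (\<Prod>i<n. measure (?M i) {w ! i})"
    unfolding cyl weighted_product_def
    by (rule measure_PiM_emb) (use letters in \<open>auto simp: letter_measure_def sets_point_measure\<close>)
  also have "\<dots> = (\<Prod>i<n. f (Suc i) (w ! i) / (\<Sum>x\<in>{0,1,2}. f (Suc i) x))"
  proof (rule prod.cong[OF refl])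
    fix i assume "i \<in> {..<n}"
    then have "emeasure (?M i) {w ! i} = ennreal (f (Suc i) (w ! i) / (\<Sum>x\<in>{0,1,2}. f (Suc i) x))"
      using letters by (intro emeasure_letter_measure_singleton pos) auto
    moreover have "0 \<le> f (Suc i) (w ! i) / (\<Sum>x\<in>{0::nat,1,2}. f (Suc i) x)"
      using pos letters \<open>i \<in> {..<n}\<close> by (intro divide_nonneg_nonneg sum_nonneg less_imp_le) auto
    ultimately show "measure (?M i) {w ! i} = f (Suc i) (w ! i) / (\<Sum>x\<in>{0,1,2}. f (Suc i) x)"
      by (simp add: measure_def)
  qed
  also have "\<dots> = (\<Prod>i<n. f (Suc i) (w ! i)) / (\<Prod>i<n. \<Sum>x\<in>{0,1,2}. f (Suc i) x)"
    by (rule prod_dividef)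
  also have "\<dots> = (\<Prod>j\<in>{1..n}. f j (w ! (j - 1))) / (\<Prod>j\<in>{1..n}. \<Sum>x\<in>{0,1,2}. f j x)"
    by (simp only: prod.atLeast1_atMost_eq One_nat_def diff_Suc_Suc minus_nat.diff_0)
  finally show ?thesis .
qed

lemma average_ge_lower_bound:
  fixes L :: "nat \<Rightarrow> real"
  assumes "\<And>j. c \<le> L j" and "1 \<le> n"
  shows "c \<le> (\<Sum>j\<in>{1..n}. L j) / real n"
proof -
  have "real n * c \<le> (\<Sum>j\<in>{1..n}. L j)"
    using sum_bounded_below[of "{1..n}" c L] assms(1) by (simp add: mult.commute)
  then show ?thesis using assms(2) by (simp add: field_simps)
qed

lemma average_le_upper_bound:
  fixes L :: "nat \<Rightarrow> real"
  assumes "\<And>j. L j \<le> M" and "1 \<le> n"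
  shows "(\<Sum>j\<in>{1..n}. L j) / real n \<le> M"
proof -
  have "(\<Sum>j\<in>{1..n}. L j) \<le> real n * M"
    using sum_bounded_above[of "{1..n}" L M] assms(1) by (simp add: mult.commute)
  then show ?thesis using assms(2) by (simp add: field_simps)
qed

lemma average_le_of_constant_block:
  fixes L :: "nat \<Rightarrow> real"
  assumes upper: "\<And>j. L j \<le> M" and block: "\<And>j. t \<le> j \<Longrightarrow> j < u \<Longrightarrow> L j = c"
    and "c \<le> M" "1 \<le> t" "t < u"
  shows "(\<Sum>j\<in>{1..u - 1}. L j) / real (u - 1) \<le> c + 2 * (M - c) * (real t / real u)"
proof -
  have "{1..u - 1} = {1..<t} \<union> {t..<u}" using assms by auto
  then have "(\<Sum>j\<in>{1..u - 1}. L j) = (\<Sum>j\<in>{1..<t}. L j) + (\<Sum>j\<in>{t..<u}. L j)"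
    by (simp add: sum.union_disjoint)
  also have "(\<Sum>j\<in>{t..<u}. L j) = real (u - t) * c"
    using block by simp
  also have "(\<Sum>j\<in>{1..<t}. L j) \<le> real (t - 1) * M"
    using sum_bounded_above[of "{1..<t}" L M] upper by simp
  finally have "(\<Sum>j\<in>{1..u - 1}. L j) \<le> real (u - 1) * c + real (t - 1) * (M - c)"
    using assms by (simp add: of_nat_diff algebra_simps)
  also have "\<dots> \<le> real (u - 1) * c + real t * (M - c)"
    using assms by (intro add_left_mono mult_right_mono) auto
  finally have "(\<Sum>j\<in>{1..u - 1}. L j) / real (u - 1) \<le> (real (u - 1) * c + real t * (M - c)) / real (u - 1)"
    by (rule divide_right_mono) simp
  also have "\<dots> = c + real t * (M - c) / real (u - 1)"
    using assms by (simp add: add_divide_distrib)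
  finally have sum_le: "(\<Sum>j\<in>{1..u - 1}. L j) / real (u - 1) \<le> c + real t * (M - c) / real (u - 1)" .
  have "real t * (M - c) / real (u - 1) \<le> real t * (M - c) / (real u / 2)"
    using assms by (intro divide_left_mono) auto
  also have "\<dots> = 2 * (M - c) * (real t / real u)"
    by (simp add: field_simps)
  finally show ?thesis
    using sum_le by (meson add_left_mono order_trans)
qed

lemma liminf_average_eq_lower_bound:
  fixes L :: "nat \<Rightarrow> real" and t u :: "nat \<Rightarrow> nat"
  assumes lower: "\<And>j. c \<le> L j" and upper: "\<And>j. L j \<le> M"
    and block: "\<And>k j. t k \<le> j \<Longrightarrow> j < u k \<Longrightarrow> L j = c"
    and t_pos: "\<And>k. 1 \<le> t k" and t_less: "\<And>k. t k < u k" and u_mono: "strict_mono u"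
    and ratio: "(\<lambda>k. real (t k) / real (u k)) \<longlonglongrightarrow> 0"
  shows "liminf (\<lambda>n. ereal ((\<Sum>j\<in>{1..n}. L j) / real n)) = ereal c"
proof (rule antisym)
  define avg where "avg n = (\<Sum>j\<in>{1..n}. L j) / real n" for n
  have cM: "c \<le> M" using lower upper order_trans by blast
  have sub_mono: "strict_mono (\<lambda>k. u k - 1)"
  proof (rule strict_monoI)
    fix x y :: nat assume "x < y"
    then have "u x < u y" by (rule strict_monoD[OF u_mono])
    moreover have "1 \<le> u x" using t_pos[of x] t_less[of x] by linarith
    ultimately show "u x - 1 < u y - 1" by linarith
  qed
  have "(\<lambda>k. avg (u k - 1)) \<longlonglongrightarrow> c"
  proof (rule tendsto_sandwich)
    show "\<forall>\<^sub>F k in sequentially. c \<le> avg (u k - 1)"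
    proof (intro always_eventually allI)
      fix k
      have "1 \<le> u k - 1" using t_pos[of k] t_less[of k] by linarith
      then show "c \<le> avg (u k - 1)"
        unfolding avg_def by (rule average_ge_lower_bound[of c L, OF lower])
    qed
    show "\<forall>\<^sub>F k in sequentially. avg (u k - 1) \<le> c + 2 * (M - c) * (real (t k) / real (u k))"
      unfolding avg_def
      by (intro always_eventually allI average_le_of_constant_block[OF upper block cM t_pos t_less])
    show "(\<lambda>k. c + 2 * (M - c) * (real (t k) / real (u k))) \<longlonglongrightarrow> c"
      using tendsto_add[OF tendsto_const tendsto_mult[OF tendsto_const ratio]] by simp
  qed simp
  then have "liminf ((\<lambda>n. ereal (avg n)) \<circ> (\<lambda>k. u k - 1)) = ereal c"
    by (intro lim_imp_Liminf) (simp_all add: o_def)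
  then show "liminf (\<lambda>n. ereal (avg n)) \<le> ereal c"
    using liminf_subseq_mono[OF sub_mono, of "\<lambda>n. ereal (avg n)"] by simp
  show "ereal c \<le> liminf (\<lambda>n. ereal ((\<Sum>j\<in>{1..n}. L j) / real n))"
    using average_ge_lower_bound[of c L, OF lower]
    by (intro Liminf_bounded) (auto simp: eventually_sequentially intro!: exI[of _ 1])
qed

lemma limsup_subseq_tendsto_real:
  fixes x :: "nat \<Rightarrow> real"
  assumes "\<forall>\<^sub>F n in sequentially. A \<le> x n \<and> x n \<le> B"
  shows "\<exists>r. strict_mono r \<and> (\<lambda>k. x (r k)) \<longlonglongrightarrow> real_of_ereal (limsup (\<lambda>n. ereal (x n)))"
proof -
  obtain r where r: "strict_mono r" "((\<lambda>n. ereal (x n)) \<circ> r) \<longlonglongrightarrow> limsup (\<lambda>n. ereal (x n))"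
    using limsup_subseq_lim by blast
  have "limsup (\<lambda>n. ereal (x n)) \<le> ereal B"
    using assms by (intro Limsup_bounded) (auto elim: eventually_mono)
  moreover have "ereal A \<le> liminf (\<lambda>n. ereal (x n))"
    using assms by (intro Liminf_bounded) (auto elim: eventually_mono)
  then have "ereal A \<le> limsup (\<lambda>n. ereal (x n))"
    using Liminf_le_Limsup[of sequentially "\<lambda>n. ereal (x n)"] by simp
  ultimately have "limsup (\<lambda>n. ereal (x n)) = ereal (real_of_ereal (limsup (\<lambda>n. ereal (x n))))"
    by (cases "limsup (\<lambda>n. ereal (x n))") auto
  with r(2) have "(\<lambda>k. ereal (x (r k))) \<longlonglongrightarrow> ereal (real_of_ereal (limsup (\<lambda>n. ereal (x n))))"
    by (simp add: o_def)
  then show ?thesis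
    using r(1) lim_ereal by blast
qed

lemma le_of_increasing_from_one:
  fixes T :: "nat \<Rightarrow> nat"
  assumes T_mono: "\<forall>k\<ge>1. T k < T (Suc k)" and "1 \<le> k" "k \<le> l"
  shows "T k \<le> T l"
  using \<open>k \<le> l\<close>
proof (induction l rule: dec_induct)
  case (step l)
  then have "T l < T (Suc l)" using T_mono \<open>1 \<le> k\<close> by simp
  with step.IH show ?case by simp
qed simp

lemma a_block_iff_odd:
  assumes T_mono: "\<forall>k\<ge>1. T k < T (Suc k)"
    and m: "1 \<le> m" "T m \<le> j" "j < T (Suc m)"
  shows "a_block T j \<longleftrightarrow> odd m"
proof
  assume "odd m"
  then obtain k where "m = 2 * k + 1" by (metis oddE)
  then show "a_block T j" unfolding a_block_def
    using m by (intro exI[of _ "Suc k"]) auto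
next
  assume "a_block T j"
  then obtain k where k: "k \<ge> 1" "T (2 * k - 1) \<le> j" "j < T (2 * k)"
    unfolding a_block_def by blast
  have "\<not> 2 * k \<le> m"
    using le_of_increasing_from_one[OF T_mono, of "2 * k" m] k m by linarith
  moreover have "\<not> Suc m \<le> 2 * k - 1"
    using le_of_increasing_from_one[OF T_mono, of "Suc m" "2 * k - 1"] k m by linarith
  ultimately have "m = 2 * k - 1" by linarith
  then show "odd m" using k(1) by simp
qed

lemma long_blocks_of_one_kind:
  fixes T :: "nat \<Rightarrow> nat"
  assumes T1: "T 1 = 1" and T_mono: "\<forall>k\<ge>1. T k < T (Suc k)"
    and T_ratio: "filterlim (\<lambda>k. real (T (Suc k)) / real (T k)) at_top sequentially"
  obtains t u :: "nat \<Rightarrow> nat"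
  where "\<And>k. 1 \<le> t k" "\<And>k. t k < u k" "strict_mono u"
    "(\<lambda>k. real (t k) / real (u k)) \<longlonglongrightarrow> 0"
    "\<And>k j. t k \<le> j \<Longrightarrow> j < u k \<Longrightarrow> a_block T j \<longleftrightarrow> P"
proof -
  define m :: "nat \<Rightarrow> nat" where "m k = (if P then 2 * k + 1 else 2 * k + 2)" for k
  have m_pos: "1 \<le> m k" for k unfolding m_def by simp
  have m_mono: "strict_mono m" unfolding m_def strict_mono_def by simp
  have m_odd: "odd (m k) \<longleftrightarrow> P" for k unfolding m_def by simp
  show thesis
  proof (rule that[of "\<lambda>k. T (m k)" "\<lambda>k. T (Suc (m k))"])
    show "1 \<le> T (m k)" for k
      using le_of_increasing_from_one[OF T_mono, of 1 "m k"] T1 m_pos by simp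
    show "T (m k) < T (Suc (m k))" for k
      using T_mono m_pos by simp
    show "strict_mono (\<lambda>k. T (Suc (m k)))"
    proof (rule strict_monoI)
      fix x y :: nat assume "x < y"
      then have "Suc (Suc (m x)) \<le> Suc (m y)" using strict_monoD[OF m_mono] by (simp add: Suc_le_eq)
      then have "T (Suc (Suc (m x))) \<le> T (Suc (m y))"
        by (rule le_of_increasing_from_one[OF T_mono, rotated]) simp
      moreover have "T (Suc (m x)) < T (Suc (Suc (m x)))" using T_mono by simp
      ultimately show "T (Suc (m x)) < T (Suc (m y))" by simp
    qed
    have "filterlim (\<lambda>k. real (T (Suc (m k))) / real (T (m k))) at_top sequentially"
      using filterlim_compose[OF T_ratio filterlim_subseq[OF m_mono]] by (simp add: o_def)
    from tendsto_inverse_0_at_top[OF this]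
    show "(\<lambda>k. real (T (m k)) / real (T (Suc (m k)))) \<longlonglongrightarrow> 0" by simp
    show "a_block T j \<longleftrightarrow> P" if "T (m k) \<le> j" "j < T (Suc (m k))" for k j
      using a_block_iff_odd[OF T_mono m_pos that] m_odd by simp
  qed
qed

text \<open>\<open>letter_prob a b T j x\<close> is the paper's \<open>p\<^sub>j\<close> for \<open>\<epsilon>\<^sub>j = x\<close>, and \<open>tau_hom p q\<close> is the
  \<open>L\<^sup>q\<close>-spectrum of the homogeneous multinomial measure with weights \<open>p 1, p 2, p 3\<close>.\<close>
definition letter_prob :: "(nat \<Rightarrow> real) \<Rightarrow> (nat \<Rightarrow> real) \<Rightarrow> (nat \<Rightarrow> nat) \<Rightarrow> nat \<Rightarrow> nat \<Rightarrow> real" where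
  "letter_prob a b T j x = (if a_block T j then a (x + 1) else b (x + 1))"

definition tau_hom :: "(nat \<Rightarrow> real) \<Rightarrow> real \<Rightarrow> real" where
  "tau_hom p q = log 3 (\<Sum>i\<in>{1,2,3}. p i powr q)"

lemma letter_prob_powr_pos:
  assumes "\<forall>i\<in>{1,2,3}. 0 < a i" "\<forall>i\<in>{1,2,3}. 0 < b i" and "x \<in> {0,1,2}"
  shows "0 < letter_prob a b T j x powr q"
proof -
  have "0 < letter_prob a b T j x"
    using assms unfolding letter_prob_def by (auto simp: eval_nat_numeral)
  then show ?thesis by (metis powr_gt_zero order_less_irrefl)
qed

lemma mu_powr_eq_prod_letter_prob:
  "mu a b T w powr q = (\<Prod>j\<in>{1..length w}. letter_prob a b T j (w ! (j - 1)) powr q)"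
  unfolding mu_def letter_prob_def by (rule prod_powr_distrib)

lemma sum_words_mu_powr:
  "(\<Sum>w\<in>words n. mu a b T w powr q) = (\<Prod>j\<in>{1..n}. \<Sum>x\<in>{0,1,2}. letter_prob a b T j x powr q)"
proof -
  have "(\<Sum>w\<in>words n. mu a b T w powr q)
      = (\<Sum>w\<in>words n. \<Prod>j\<in>{1..n}. letter_prob a b T j (w ! (j - 1)) powr q)"
    by (rule sum.cong) (auto simp: words_def mu_powr_eq_prod_letter_prob)
  then show ?thesis
    using sum_words_prod_positions[of "\<lambda>j x. letter_prob a b T j x powr q" n] by simp
qed

lemma tau_n_eq_average:
  assumes a_pos: "\<forall>i\<in>{1,2,3}. 0 < a i" and b_pos: "\<forall>i\<in>{1,2,3}. 0 < b i"
  shows "tau_n a b T q n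
           = (\<Sum>j\<in>{1..n}. if a_block T j then tau_hom a q else tau_hom b q) / real n"
proof -
  define S where "S j = (\<Sum>x\<in>{0,1,2}. letter_prob a b T j x powr q)" for j
  have "0 < S j" for j
    unfolding S_def using letter_prob_powr_pos[OF a_pos b_pos] by (intro sum_pos) auto
  then have S_nonzero: "S j \<noteq> 0" for j by (metis less_irrefl)
  have log_S: "log 3 (S j) = (if a_block T j then tau_hom a q else tau_hom b q)" for j
    unfolding S_def letter_prob_def tau_hom_def by (simp add: add.assoc eval_nat_numeral)
  have "log 3 (\<Sum>w\<in>words n. mu a b T w powr q) = log 3 (\<Prod>j\<in>{1..n}. S j)"
    unfolding sum_words_mu_powr S_def ..
  also have "\<dots> = (\<Sum>j\<in>{1..n}. log 3 (S j))"
    using ln_prod[of "{1..n}" S] S_nonzero by (simp add: log_def sum_divide_distrib)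
  finally have "log 3 (\<Sum>w\<in>words n. mu a b T w powr q)
                 = (\<Sum>j\<in>{1..n}. if a_block T j then tau_hom a q else tau_hom b q)"
    by (simp only: log_S)
  then show ?thesis unfolding tau_n_def by (simp only:)
qed

lemma tau_low_eq_min:
  assumes a_pos: "\<forall>i\<in>{1,2,3}. 0 < a i" and b_pos: "\<forall>i\<in>{1,2,3}. 0 < b i"
    and T1: "T 1 = 1" and T_mono: "\<forall>k\<ge>1. T k < T (Suc k)"
    and T_ratio: "filterlim (\<lambda>k. real (T (Suc k)) / real (T k)) at_top sequentially"
  shows "tau_low a b T q = min (tau_hom a q) (tau_hom b q)"
proof -
  obtain t u where blocks: "\<And>k. 1 \<le> t k" "\<And>k. t k < u k" "strict_mono u"
      "(\<lambda>k. real (t k) / real (u k)) \<longlonglongrightarrow> 0"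
      "\<And>k j. t k \<le> j \<Longrightarrow> j < u k \<Longrightarrow> a_block T j \<longleftrightarrow> tau_hom a q \<le> tau_hom b q"
    using long_blocks_of_one_kind[OF T1 T_mono T_ratio, where P = "tau_hom a q \<le> tau_hom b q"]
    by blast
  have "liminf (\<lambda>n. ereal (tau_n a b T q n)) = ereal (min (tau_hom a q) (tau_hom b q))"
    unfolding tau_n_eq_average[OF a_pos b_pos]
    by (rule liminf_average_eq_lower_bound[OF _ _ _ blocks(1-4),
          where M = "max (tau_hom a q) (tau_hom b q)"])
       (auto dest: blocks(5))
  then show ?thesis unfolding tau_low_def by (simp only: real_of_ereal.simps(1))
qed

lemma measure_cyl_multinomial:
  assumes a_pos: "\<forall>i\<in>{1,2,3}. 0 < a i" and b_pos: "\<forall>i\<in>{1,2,3}. 0 < b i"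
    and w: "w \<in> words n"
  shows "measure (weighted_product (\<lambda>j x. letter_prob a b T j x powr q)) (cyl w)
           = mu a b T w powr q * 3 powr (- (real n * tau_n a b T q n))"
proof -
  let ?Z = "\<Sum>v\<in>words n. mu a b T v powr q"
  have pos: "\<And>j x. x \<in> {0,1,2} \<Longrightarrow> 0 < letter_prob a b T j x powr q"
    using letter_prob_powr_pos[OF a_pos b_pos] by blast
  have "0 < ?Z" unfolding sum_words_mu_powr using pos by (intro prod_pos sum_pos) auto
  have "length w = n" using w by (simp add: words_def)
  have "measure (weighted_product (\<lambda>j x. letter_prob a b T j x powr q)) (cyl w)
          = (\<Prod>j\<in>{1..n}. letter_prob a b T j (w ! (j - 1)) powr q)
              / (\<Prod>j\<in>{1..n}. \<Sum>x\<in>{0,1,2}. letter_prob a b T j x powr q)"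
    using pos w by (rule measure_weighted_product_cyl)
  also have "\<dots> = mu a b T w powr q / ?Z"
    unfolding sum_words_mu_powr mu_powr_eq_prod_letter_prob[of a b T w] \<open>length w = n\<close> ..
  also have "\<dots> = mu a b T w powr q * 3 powr (- log 3 ?Z)"
    using \<open>0 < ?Z\<close> by (simp add: powr_minus divide_inverse)
  also have "log 3 ?Z = real n * tau_n a b T q n"
    by (cases "n = 0") (simp_all add: tau_n_def sum_words_mu_powr)
  finally show ?thesis .
qed

lemma measure_cyl_multinomial_le:
  assumes a_pos: "\<forall>i\<in>{1,2,3}. 0 < a i" and b_pos: "\<forall>i\<in>{1,2,3}. 0 < b i"
    and w: "w \<in> words n" and x: "x \<le> real n * tau_n a b T q n"
  shows "measure (weighted_product (\<lambda>j x. letter_prob a b T j x powr q)) (cyl w)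
           \<le> mu a b T w powr q * 3 powr (- x)"
  unfolding measure_cyl_multinomial[OF a_pos b_pos w] using x by (intro mult_left_mono) auto

lemma tau_low_le_tau_n:
  assumes a_pos: "\<forall>i\<in>{1,2,3}. 0 < a i" and b_pos: "\<forall>i\<in>{1,2,3}. 0 < b i"
    and T1: "T 1 = 1" and T_mono: "\<forall>k\<ge>1. T k < T (Suc k)"
    and T_ratio: "filterlim (\<lambda>k. real (T (Suc k)) / real (T k)) at_top sequentially"
    and "1 \<le> n"
  shows "tau_low a b T q \<le> tau_n a b T q n"
  unfolding tau_low_eq_min[OF a_pos b_pos T1 T_mono T_ratio] tau_n_eq_average[OF a_pos b_pos]
  using \<open>1 \<le> n\<close> by (intro average_ge_lower_bound) auto

lemma tau_n_subseq_tendsto_tau_up: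
  assumes a_pos: "\<forall>i\<in>{1,2,3}. 0 < a i" and b_pos: "\<forall>i\<in>{1,2,3}. 0 < b i"
  obtains r where "strict_mono r" "(\<lambda>k. tau_n a b T q (r k)) \<longlonglongrightarrow> tau_up a b T q"
proof -
  have "\<forall>\<^sub>F n in sequentially. min (tau_hom a q) (tau_hom b q) \<le> tau_n a b T q n
                                     \<and> tau_n a b T q n \<le> max (tau_hom a q) (tau_hom b q)"
    unfolding eventually_sequentially tau_n_eq_average[OF a_pos b_pos]
    by (intro exI[of _ 1] allI impI conjI average_ge_lower_bound average_le_upper_bound) auto
  from limsup_subseq_tendsto_real[OF this] obtain r where
    "strict_mono r" "(\<lambda>k. tau_n a b T q (r k)) \<longlonglongrightarrow> real_of_ereal (limsup (\<lambda>n. ereal (tau_n a b T q n)))"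
    by blast
  then show thesis by (rule that[unfolded tau_up_def])
qed

theorem lemma6:
  fixes a b :: "nat \<Rightarrow> real" and T :: "nat \<Rightarrow> nat" and q :: real
  assumes a_pos: "\<forall>i\<in>{1,2,3}. 0 < a i \<and> a i < 1"
    and b_pos: "\<forall>i\<in>{1,2,3}. 0 < b i \<and> b i < 1"
    and a_sum: "a 1 + a 2 + a 3 = 1"
    and b_sum: "b 1 + b 2 + b 3 = 1"
    and T1: "T 1 = 1"
    and T_mono: "\<forall>k\<ge>1. T k < T (Suc k)"
    and T_ratio: "filterlim (\<lambda>k. real (T (Suc k)) / real (T k)) at_top sequentially"
  shows "\<exists>(\<nu> :: (nat \<Rightarrow> nat) measure) (n :: nat \<Rightarrow> nat).
           prob_space \<nu> \<and> sets \<nu> = sets seq_space \<and> strict_mono n \<and>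
           (\<forall>m\<ge>1. \<forall>w\<in>words m.
              measure \<nu> (cyl w) \<le> mu a b T w powr q * 3 powr (- (real m * tau_low a b T q))) \<and>
           (\<forall>\<epsilon>>0. \<exists>k0. \<forall>k\<ge>k0. \<forall>w\<in>words (n k).
              measure \<nu> (cyl w) \<le> mu a b T w powr q * 3 powr (- (real (n k) * (tau_up a b T q - \<epsilon>))))"
proof -
  have a_pos': "\<forall>i\<in>{1,2,3}. 0 < a i" and b_pos': "\<forall>i\<in>{1,2,3}. 0 < b i"
    using a_pos b_pos by auto
  define \<nu> where "\<nu> = weighted_product (\<lambda>j x. letter_prob a b T j x powr q)"
  have \<nu>_le: "measure \<nu> (cyl w) \<le> mu a b T w powr q * 3 powr (- x)"
    if "w \<in> words m" "x \<le> real m * tau_n a b T q m" for w m x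
    unfolding \<nu>_def using that by (rule measure_cyl_multinomial_le[OF a_pos' b_pos'])
  obtain r where r: "strict_mono r" "(\<lambda>k. tau_n a b T q (r k)) \<longlonglongrightarrow> tau_up a b T q"
    using tau_n_subseq_tendsto_tau_up[OF a_pos' b_pos'] by blast
  have "prob_space \<nu>"
    unfolding \<nu>_def by (rule prob_space_weighted_product) (rule letter_prob_powr_pos[OF a_pos' b_pos'])
  moreover have "sets \<nu> = sets seq_space" by (simp add: \<nu>_def sets_weighted_product)
  moreover have "measure \<nu> (cyl w) \<le> mu a b T w powr q * 3 powr (- (real m * tau_low a b T q))"
    if "1 \<le> m" "w \<in> words m" for m w
    using that(1) tau_low_le_tau_n[OF a_pos' b_pos' T1 T_mono T_ratio]
    by (intro \<nu>_le[OF that(2)] mult_left_mono) auto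
  moreover have "\<exists>k0. \<forall>k\<ge>k0. \<forall>w\<in>words (r k).
      measure \<nu> (cyl w) \<le> mu a b T w powr q * 3 powr (- (real (r k) * (tau_up a b T q - \<epsilon>)))"
    if \<epsilon>: "0 < \<epsilon>" for \<epsilon>
  proof -
    obtain k0 where "\<forall>k\<ge>k0. tau_up a b T q - \<epsilon> < tau_n a b T q (r k)"
      using order_tendstoD(1)[OF r(2), of "tau_up a b T q - \<epsilon>"] \<epsilon>
      by (auto simp: eventually_sequentially)
    then show ?thesis by (meson \<nu>_le less_imp_le mult_left_mono of_nat_0_le_iff)
  qed
  ultimately show ?thesis using r(1) by blast
qed

end
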